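(* Let $X$ be a topological space, let $Y$ be a functionally closed subset of $X$, let $(g,h)$ be a countable pair of Hahn on $X$, and let $f_0:X\to\overline{\mathbb R}$ be a continuous function such that $g(y)\le f_0(y)\le h(y)$ for all $y\in Y$. Then there exists a continuous function $f:X\to\overline{\mathbb R}$ such that $f(y)=f_0(y)$ for all $y\in Y$ and $g(x)\le f(x)\le h(x)$ for all $x\in X$.
   Context: $\overline{\mathbb R}=[-\infty,+\infty]$ with the order topology. A set $A\subseteq X$ is functionally closed if $A=\alpha^{-1}(0)$ for some continuous $\alpha:X\to[0,1]$. A pair $(g,h)$ of functions $g,h:X\to\overline{\mathbb R}$ is a countable pair of Hahn if there are continuous functions $g_n,h_n:X\to\overline{\mathbb R}$ ($n\in\mathbb N$) such that $g(x)=\inf_{n\in\mathbb N}g_n(x)\le\sup_{n\in\mathbb N}h_n(x)=h(x)$ for every $x\in X$. *)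

theory Defs
  imports "HOL-Analysis.Analysis" "HOL-Library.Extended_Real"
begin

definition functionally_closed :: "'a topology \<Rightarrow> 'a set \<Rightarrow> bool" where
  "functionally_closed X A \<longleftrightarrow>
     (\<exists>\<alpha>. continuous_map X (top_of_set {0..1::real}) \<alpha> \<and>
          A = {x \<in> topspace X. \<alpha> x = 0})"

definition countable_Hahn_pair ::
    "'a topology \<Rightarrow> ('a \<Rightarrow> ereal) \<Rightarrow> ('a \<Rightarrow> ereal) \<Rightarrow> bool" where
  "countable_Hahn_pair X g h \<longleftrightarrow>
     (\<exists>(gn :: nat \<Rightarrow> 'a \<Rightarrow> ereal) (hn :: nat \<Rightarrow> 'a \<Rightarrow> ereal).
        (\<forall>n. continuous_map X (euclidean :: ereal topology) (gn n)) \<and>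
        (\<forall>n. continuous_map X (euclidean :: ereal topology) (hn n)) \<and>
        (\<forall>x \<in> topspace X. g x = (INF n. gn n x) \<and> h x = (SUP n. hn n x) \<and> g x \<le> h x))"

end

theory Submission
  imports Defs
begin

(* Everything is done in the bounded scale [-1,1], transported along an order
   isomorphism between the extended reals and [-1,1]. If l i and u i are continuous
   there, indexed by i = 0, 1, ..., with inf l <= sup u, then the insertion potential

     Phi(x, t) = sum_i 2^-i (max(0, t - l i x) - max(0, u i x - t))

   is strictly increasing in t and continuous in x, so its zero phi(x) depends
   continuously on x ({phi < r} = {Phi(., r) > 0}) and lies between inf l and sup u.
   To extend f0 from Y = alpha^-1(0), replace g = inf g_n by the infimum of
   max(g_n, f0 - m alpha) and h = sup h_n by the supremum of min(h_n, f0 + m alpha),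
   the penalties being taken in [-1,1]: on Y these are max(g, f0) and min(h, f0), which
   squeeze the inserted function onto f0, while off Y the penalties run off to -oo and
   +oo and leave g and h unchanged. *)

lemma continuous_map_max:
  fixes f g :: "'a \<Rightarrow> 'b::linorder_topology"
  assumes "continuous_map X euclidean f" "continuous_map X euclidean g"
  shows "continuous_map X euclidean (\<lambda>x. max (f x) (g x))"
proof -
  have "{x \<in> topspace X. a < max (f x) (g x)} = {x \<in> topspace X. a < f x} \<union> {x \<in> topspace X. a < g x}"
    "{x \<in> topspace X. max (f x) (g x) < a} = {x \<in> topspace X. f x < a} \<inter> {x \<in> topspace X. g x < a}"
    for a
    by (auto simp: less_max_iff_disj)
  with assms show ?thesis
    unfolding continuous_map_upper_lower_semicontinuous_lt by (simp add: openin_Un openin_Int)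
qed

lemma continuous_map_min:
  fixes f g :: "'a \<Rightarrow> 'b::linorder_topology"
  assumes "continuous_map X euclidean f" "continuous_map X euclidean g"
  shows "continuous_map X euclidean (\<lambda>x. min (f x) (g x))"
proof -
  have "{x \<in> topspace X. a < min (f x) (g x)} = {x \<in> topspace X. a < f x} \<inter> {x \<in> topspace X. a < g x}"
    "{x \<in> topspace X. min (f x) (g x) < a} = {x \<in> topspace X. f x < a} \<union> {x \<in> topspace X. g x < a}"
    for a
    by (auto simp: min_less_iff_disj)
  with assms show ?thesis
    unfolding continuous_map_upper_lower_semicontinuous_lt by (simp add: openin_Un openin_Int)
qed

lemma continuous_map_suminf:
  fixes f :: "nat \<Rightarrow> 'a \<Rightarrow> real"
  assumes cont: "\<And>n. continuous_map X euclideanreal (f n)"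
    and bound: "\<And>n x. x \<in> topspace X \<Longrightarrow> \<bar>f n x\<bar> \<le> M n"
    and "summable M"
  shows "continuous_map X euclideanreal (\<lambda>x. \<Sum>n. f n x)"
proof -
  have "uniform_limit (topspace X) (\<lambda>N x. \<Sum>n<N. f n x) (\<lambda>x. \<Sum>n. f n x) sequentially"
    using bound \<open>summable M\<close> by (intro Weierstrass_m_test) auto
  moreover have "\<forall>\<^sub>F N in sequentially. continuous_map X euclideanreal (\<lambda>x. \<Sum>n<N. f n x)"
    using cont by (intro always_eventually allI continuous_map_sum) auto
  ultimately show ?thesis
    using Met_TC.continuous_map_uniform_limit[where F = sequentially and X = X and
        f = "\<lambda>N x. \<Sum>n<N. f n x" and g = "\<lambda>x. \<Sum>n. f n x"]
    by (auto simp: uniform_limit_iff)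
qed

lemma continuous_map_implicit_root:
  fixes \<Phi> :: "'a \<Rightarrow> real \<Rightarrow> real"
  assumes cont: "\<And>t. continuous_map X euclideanreal (\<lambda>x. \<Phi> x t)"
    and mono: "\<And>x. x \<in> topspace X \<Longrightarrow> strict_mono (\<Phi> x)"
    and cont_root: "\<And>x. x \<in> topspace X \<Longrightarrow> continuous_on {a..b} (\<Phi> x)"
    and sign: "\<And>x. x \<in> topspace X \<Longrightarrow> \<Phi> x a \<le> 0 \<and> 0 \<le> \<Phi> x b"
  shows "\<exists>\<phi>. continuous_map X euclideanreal \<phi> \<and> (\<forall>x \<in> topspace X. \<Phi> x (\<phi> x) = 0)"
proof -
  have "\<exists>t. \<Phi> x t = 0" if x: "x \<in> topspace X" for x
  proof -
    have "a \<le> b"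
      using sign[OF x] strict_mono_less[OF mono[OF x], of b a] by (meson not_le order_trans)
    then show ?thesis
      using IVT'[of "\<Phi> x" a 0 b] sign[OF x] cont_root[OF x] by auto
  qed
  then obtain \<phi> where \<phi>: "\<And>x. x \<in> topspace X \<Longrightarrow> \<Phi> x (\<phi> x) = 0"
    by metis
  have "r < \<phi> x \<longleftrightarrow> \<Phi> x r < 0" "\<phi> x < r \<longleftrightarrow> 0 < \<Phi> x r" if "x \<in> topspace X" for x r
    using strict_mono_less[OF mono[OF that]] \<phi>[OF that] by metis+
  then have "{x \<in> topspace X. r < \<phi> x} = {x \<in> topspace X. \<Phi> x r < 0}"
    "{x \<in> topspace X. \<phi> x < r} = {x \<in> topspace X. 0 < \<Phi> x r}" for r
    by auto
  moreover have "openin X {x \<in> topspace X. \<Phi> x r < 0}" "openin X {x \<in> topspace X. 0 < \<Phi> x r}" for r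
    using openin_continuous_map_preimage[OF cont, of "{..<0}" r]
      openin_continuous_map_preimage[OF cont, of "{0<..}" r] by simp_all
  ultimately have "continuous_map X euclideanreal \<phi>"
    unfolding continuous_map_upper_lower_semicontinuous_lt by simp
  with \<phi> show ?thesis
    by blast
qed

(* from_nat enumerates all of 'i, with repetitions if 'i is finite; repeated terms are harmless. *)
definition insertion_potential :: "('i::countable \<Rightarrow> real) \<Rightarrow> ('i \<Rightarrow> real) \<Rightarrow> real \<Rightarrow> real" where
  "insertion_potential a b t =
     (\<Sum>n. (1/2)^n * (max 0 (t - a (from_nat n)) - max 0 (b (from_nat n) - t)))"

lemma abs_hinge_difference_le:
  fixes a b t :: real
  assumes "\<bar>a\<bar> \<le> c" "\<bar>b\<bar> \<le> c"
  shows "\<bar>max 0 (t - a) - max 0 (b - t)\<bar> \<le> \<bar>t\<bar> + c"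
  using assms by (auto simp: max_def abs_le_iff)

lemma insertion_potential_term_bound:
  assumes "\<And>i. \<bar>a i\<bar> \<le> c" "\<And>i. \<bar>b i\<bar> \<le> c" "\<bar>t\<bar> \<le> r"
  shows "\<bar>(1/2)^n * (max 0 (t - a (from_nat n)) - max 0 (b (from_nat n) - t))\<bar>
           \<le> (1/2::real)^n * (r + c)"
proof -
  have "\<bar>max 0 (t - a (from_nat n)) - max 0 (b (from_nat n) - t)\<bar> \<le> r + c"
    using abs_hinge_difference_le[OF assms(1,2)] assms(3) by (meson add_right_mono order_trans)
  then show ?thesis
    by (simp add: abs_mult mult_left_mono)
qed

lemma summable_insertion_potential:
  assumes "\<And>i. \<bar>a i\<bar> \<le> c" "\<And>i. \<bar>b i\<bar> \<le> c"
  shows "summable (\<lambda>n. (1/2::real)^n * (max 0 (t - a (from_nat n)) - max 0 (b (from_nat n) - t)))"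
proof (rule summable_comparison_test)
  show "summable (\<lambda>n. (1/2::real)^n * (\<bar>t\<bar> + c))"
    by (intro summable_mult2) simp
  show "\<exists>N. \<forall>n\<ge>N. norm ((1/2::real)^n * (max 0 (t - a (from_nat n)) - max 0 (b (from_nat n) - t)))
          \<le> (1/2)^n * (\<bar>t\<bar> + c)"
    using insertion_potential_term_bound[of a c b t "\<bar>t\<bar>"] assms by simp
qed

lemma strict_mono_insertion_potential:
  assumes bounded: "\<And>i. \<bar>a i\<bar> \<le> c" "\<And>i. \<bar>b i\<bar> \<le> c"
    and inf_le_sup: "\<And>s t. \<forall>i. t \<le> a i \<Longrightarrow> \<forall>i. b i \<le> s \<Longrightarrow> t \<le> s"
  shows "strict_mono (insertion_potential a b)"
proof (rule strict_monoI)
  fix s t :: real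
  assume "s < t"
  define p where "p n r = max 0 (r - a (from_nat n)) - max 0 (b (from_nat n) - r)" for n r
  have "\<not> ((\<forall>i. t \<le> a i) \<and> (\<forall>i. b i \<le> s))"
    using inf_le_sup[of t s] \<open>s < t\<close> by auto
  then obtain i where "a i < t \<or> s < b i"
    by (auto simp: not_le)
  then have "p (to_nat i) s < p (to_nat i) t"
    using \<open>s < t\<close> unfolding p_def by (auto simp: max_def)
  moreover have "p n s \<le> p n t" for n
    using \<open>s < t\<close> unfolding p_def by (auto simp: max_def)
  moreover have summable: "summable (\<lambda>n. (1/2::real)^n * p n r)" for r
    unfolding p_def using bounded by (rule summable_insertion_potential)
  ultimately have "0 < (\<Sum>n. (1/2::real)^n * p n t - (1/2)^n * p n s)"
    by (intro suminf_pos2[where i = "to_nat i"] summable_diff summable)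
       (simp_all add: right_diff_distrib[symmetric])
  moreover have "insertion_potential a b r = (\<Sum>n. (1/2)^n * p n r)" for r
    by (simp add: insertion_potential_def p_def)
  ultimately show "insertion_potential a b s < insertion_potential a b t"
    using suminf_diff[OF summable[of t] summable[of s]] by simp
qed

lemma insertion_potential_nonpos:
  assumes "\<And>i. \<bar>a i\<bar> \<le> c" "\<And>i. \<bar>b i\<bar> \<le> c" and "\<And>i. t \<le> a i"
  shows "insertion_potential a b t \<le> 0"
proof -
  have "insertion_potential a b t \<le> (\<Sum>n. 0)"
    unfolding insertion_potential_def
  proof (rule suminf_le)
    show "(1/2::real)^n * (max 0 (t - a (from_nat n)) - max 0 (b (from_nat n) - t)) \<le> 0" for n
      using assms(3)[of "from_nat n"] by (simp add: mult_nonneg_nonpos)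
  qed (simp_all, intro summable_insertion_potential[where c = c] assms(1,2))
  then show ?thesis
    by simp
qed

lemma insertion_potential_nonneg:
  assumes "\<And>i. \<bar>a i\<bar> \<le> c" "\<And>i. \<bar>b i\<bar> \<le> c" and "\<And>i. b i \<le> s"
  shows "0 \<le> insertion_potential a b s"
  unfolding insertion_potential_def
proof (rule suminf_nonneg)
  show "0 \<le> (1/2::real)^n * (max 0 (s - a (from_nat n)) - max 0 (b (from_nat n) - s))" for n
    using assms(3)[of "from_nat n"] by simp
qed (intro summable_insertion_potential[where c = c] assms(1,2))

lemma continuous_on_insertion_potential:
  assumes "\<And>i. \<bar>a i\<bar> \<le> c" "\<And>i. \<bar>b i\<bar> \<le> c"
  shows "continuous_on {-c..c} (insertion_potential a b)"
proof -
  have "continuous_map (top_of_set {-c..c}) euclideanreal (insertion_potential a b)"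
    unfolding insertion_potential_def
  proof (rule continuous_map_suminf[where M = "\<lambda>n. (1/2)^n * (c + c)"])
    show "\<bar>(1/2)^n * (max 0 (t - a (from_nat n)) - max 0 (b (from_nat n) - t))\<bar>
            \<le> (1/2::real)^n * (c + c)" if "t \<in> topspace (top_of_set {-c..c})" for n t
      using that assms by (intro insertion_potential_term_bound) auto
  qed (intro continuous_map_real_mult_left continuous_intros summable_mult2; simp)+
  then show ?thesis
    by simp
qed

lemma continuous_map_insertion_potential:
  assumes "\<And>i. continuous_map X euclideanreal (l i)" "\<And>i. continuous_map X euclideanreal (u i)"
    and "\<And>i x. x \<in> topspace X \<Longrightarrow> \<bar>l i x\<bar> \<le> c \<and> \<bar>u i x\<bar> \<le> c"
  shows "continuous_map X euclideanreal (\<lambda>x. insertion_potential (\<lambda>i. l i x) (\<lambda>i. u i x) t)"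
  unfolding insertion_potential_def
proof (rule continuous_map_suminf[where M = "\<lambda>n. (1/2)^n * (\<bar>t\<bar> + c)"])
  show "\<bar>(1/2)^n * (max 0 (t - l (from_nat n) x) - max 0 (u (from_nat n) x - t))\<bar>
          \<le> (1/2::real)^n * (\<bar>t\<bar> + c)" if "x \<in> topspace X" for n x
    using assms(3)[OF that] by (intro insertion_potential_term_bound) auto
qed (intro continuous_map_real_mult_left continuous_intros summable_mult2 assms(1,2); simp)+

lemma countable_Hahn_insertion_real:
  fixes l u :: "'i::countable \<Rightarrow> 'a \<Rightarrow> real" and c :: real
  assumes cont_l: "\<And>i. continuous_map X euclideanreal (l i)"
    and cont_u: "\<And>i. continuous_map X euclideanreal (u i)"
    and bounded: "\<And>i x. x \<in> topspace X \<Longrightarrow> \<bar>l i x\<bar> \<le> c \<and> \<bar>u i x\<bar> \<le> c"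
    and inf_le_sup: "\<And>x s t. \<lbrakk>x \<in> topspace X; \<forall>i. t \<le> l i x; \<forall>i. u i x \<le> s\<rbrakk> \<Longrightarrow> t \<le> s"
  shows "\<exists>\<phi>. continuous_map X euclideanreal \<phi> \<and>
           (\<forall>x \<in> topspace X. (\<forall>t. (\<forall>i. t \<le> l i x) \<longrightarrow> t \<le> \<phi> x) \<and>
                              (\<forall>s. (\<forall>i. u i x \<le> s) \<longrightarrow> \<phi> x \<le> s))"
proof -
  let ?\<Phi> = "\<lambda>x. insertion_potential (\<lambda>i. l i x) (\<lambda>i. u i x)"
  have bounded_at: "\<And>i. \<bar>l i x\<bar> \<le> c" "\<And>i. \<bar>u i x\<bar> \<le> c" if "x \<in> topspace X" for x
    using bounded[OF that] by auto
  have mono: "strict_mono (?\<Phi> x)" if "x \<in> topspace X" for x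
    using bounded_at[OF that] inf_le_sup[OF that] by (rule strict_mono_insertion_potential)
  have nonpos: "?\<Phi> x t \<le> 0" if "x \<in> topspace X" "\<forall>i. t \<le> l i x" for x t
    using that(2) by (intro insertion_potential_nonpos[where c = c] bounded_at[OF that(1)]) blast
  have nonneg: "0 \<le> ?\<Phi> x s" if "x \<in> topspace X" "\<forall>i. u i x \<le> s" for x s
    using that(2) by (intro insertion_potential_nonneg[where c = c] bounded_at[OF that(1)]) blast
  have "\<exists>\<phi>. continuous_map X euclideanreal \<phi> \<and> (\<forall>x \<in> topspace X. ?\<Phi> x (\<phi> x) = 0)"
  proof (rule continuous_map_implicit_root[where a = "-c" and b = c])
    show "?\<Phi> x (-c) \<le> 0 \<and> 0 \<le> ?\<Phi> x c" if "x \<in> topspace X" for x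
    proof -
      have "-c \<le> l i x" "u i x \<le> c" for i
        using bounded[OF that, of i] by (simp_all add: abs_le_iff)
      then show ?thesis
        by (simp add: nonpos nonneg that)
    qed
    show "continuous_map X euclideanreal (\<lambda>x. ?\<Phi> x t)" for t
      using cont_l cont_u bounded by (rule continuous_map_insertion_potential)
    show "continuous_on {-c..c} (?\<Phi> x)" if "x \<in> topspace X" for x
      using bounded_at[OF that] by (rule continuous_on_insertion_potential)
    show "strict_mono (?\<Phi> x)" if "x \<in> topspace X" for x
      using that by (rule mono)
  qed
  then obtain \<phi> where "continuous_map X euclideanreal \<phi>" and "\<And>x. x \<in> topspace X \<Longrightarrow> ?\<Phi> x (\<phi> x) = 0"
    by blast
  then show ?thesis
    using mono nonpos nonneg strict_mono_less by (metis not_le)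
qed

(* An order isomorphism of the extended reals onto [-1,1]. Its inverse unsquash is clamped
   outside [-1,1], which keeps it monotone and continuous on all of the reals. *)
definition squash :: "ereal \<Rightarrow> real" where
  "squash e = (case e of ereal r \<Rightarrow> r / (1 + \<bar>r\<bar>) | PInfty \<Rightarrow> 1 | MInfty \<Rightarrow> -1)"

definition unsquash :: "real \<Rightarrow> ereal" where
  "unsquash y = (if 1 \<le> y then \<infinity> else if y \<le> -1 then -\<infinity> else ereal (y / (1 - \<bar>y\<bar>)))"

lemma divide_one_plus_abs_bounds:
  fixes r :: real
  shows "-1 < r / (1 + \<bar>r\<bar>)" and "r / (1 + \<bar>r\<bar>) < 1"
  by (auto simp: field_simps abs_if)

lemma strict_mono_divide_one_plus_abs: "strict_mono (\<lambda>r::real. r / (1 + \<bar>r\<bar>))"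
proof (rule strict_monoI)
  fix r s :: real
  assume "r < s"
  then have "r * (1 + \<bar>s\<bar>) < s * (1 + \<bar>r\<bar>)"
    using mult_neg_pos[of r "1 + 2 * s"]
    by (cases "0 \<le> r"; cases "0 \<le> s") (auto simp: algebra_simps)
  then show "r / (1 + \<bar>r\<bar>) < s / (1 + \<bar>s\<bar>)"
    by (simp add: field_simps add_pos_nonneg)
qed

lemma squash_less_iff [simp]: "squash e < squash e' \<longleftrightarrow> e < e'"
proof (cases e; cases e')
qed (use divide_one_plus_abs_bounds strict_mono_less[OF strict_mono_divide_one_plus_abs] in
      \<open>auto simp: squash_def dest: less_asym\<close>)

lemma squash_le_iff [simp]: "squash e \<le> squash e' \<longleftrightarrow> e \<le> e'"
  by (meson not_le squash_less_iff)

lemma squash_bounds: "-1 \<le> squash e" "squash e \<le> 1"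
  using squash_le_iff[of "-\<infinity>" e] squash_le_iff[of e \<infinity>] by (simp_all add: squash_def)

lemma unsquash_squash [simp]: "unsquash (squash e) = e"
  using divide_one_plus_abs_bounds
  by (cases e) (auto simp: squash_def unsquash_def divide_simps abs_if dest: less_asym)

lemma squash_unsquash: "-1 \<le> y \<Longrightarrow> y \<le> 1 \<Longrightarrow> squash (unsquash y) = y"
  by (auto simp: squash_def unsquash_def divide_simps abs_if)

lemma le_unsquash_iff:
  assumes "-1 \<le> y"
  shows "e \<le> unsquash y \<longleftrightarrow> squash e \<le> y"
proof (cases "y \<le> 1")
  case True
  then show ?thesis
    using squash_le_iff[of e "unsquash y"] by (simp add: squash_unsquash assms)
qed (use squash_bounds[of e] in \<open>simp add: unsquash_def\<close>)

lemma unsquash_le_iff: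
  assumes "y \<le> 1"
  shows "unsquash y \<le> e \<longleftrightarrow> y \<le> squash e"
proof (cases "-1 \<le> y")
  case True
  then show ?thesis
    using squash_le_iff[of "unsquash y" e] by (simp add: squash_unsquash assms)
qed (use squash_bounds[of e] in \<open>simp add: unsquash_def\<close>)

lemma unsquash_eq_infinity: "1 \<le> y \<Longrightarrow> unsquash y = \<infinity>"
  and unsquash_eq_minus_infinity: "y \<le> -1 \<Longrightarrow> unsquash y = -\<infinity>"
  by (simp_all add: unsquash_def)

lemma continuous_map_squash: "continuous_map euclidean euclideanreal squash"
  unfolding continuous_map_upper_lower_semicontinuous_lt
proof (intro allI conjI)
  fix a :: real
  have "a < squash e \<longleftrightarrow> unsquash a < e" if "-1 \<le> a" for e
    using le_unsquash_iff[OF that, of e] by (simp flip: not_le)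
  moreover have "a < squash e" if "a < -1" for e
    using squash_bounds[of e] that by linarith
  ultimately have "{e. a < squash e} = (if a < -1 then UNIV else {unsquash a<..})"
    by (auto simp: not_less)
  then show "openin euclidean {e \<in> topspace euclidean. a < squash e}"
    by simp
  have "squash e < a \<longleftrightarrow> e < unsquash a" if "a \<le> 1" for e
    using unsquash_le_iff[OF that, of e] by (simp flip: not_le)
  moreover have "squash e < a" if "1 < a" for e
    using squash_bounds[of e] that by linarith
  ultimately have "{e. squash e < a} = (if 1 < a then UNIV else {..<unsquash a})"
    by (auto simp: not_less)
  then show "openin euclidean {e \<in> topspace euclidean. squash e < a}"
    by simp
qed

lemma continuous_map_unsquash: "continuous_map euclideanreal euclidean unsquash"
  unfolding continuous_map_upper_lower_semicontinuous_lt
proof (intro allI conjI)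
  fix e :: ereal
  have "e < unsquash y \<longleftrightarrow> squash e < y" if "e \<noteq> \<infinity>" for y
  proof (cases "y \<le> 1")
    case False
    have "squash e < 1"
      using squash_less_iff[of e \<infinity>] that by (simp add: squash_def)
    with False show ?thesis
      by (simp add: unsquash_eq_infinity that)
  qed (simp add: unsquash_le_iff flip: not_le)
  then have "{y. e < unsquash y} = (if e = \<infinity> then {} else {squash e<..})"
    by auto
  then show "openin euclideanreal {y \<in> topspace euclideanreal. e < unsquash y}"
    by simp
  have "unsquash y < e \<longleftrightarrow> y < squash e" if "e \<noteq> -\<infinity>" for y
  proof (cases "-1 \<le> y")
    case False
    have "-1 < squash e"
      using squash_less_iff[of "-\<infinity>" e] that by (simp add: squash_def)
    with False show ?thesis
      by (simp add: unsquash_eq_minus_infinity that)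
  qed (simp add: le_unsquash_iff flip: not_le)
  then have "{y. unsquash y < e} = (if e = -\<infinity> then {} else {..<squash e})"
    by auto
  then show "openin euclideanreal {y \<in> topspace euclideanreal. unsquash y < e}"
    by simp
qed

lemma squash_lower_bound_le_upper_bound:
  fixes l u :: "'i \<Rightarrow> ereal"
  assumes "(INF i. l i) \<le> (SUP i. u i)" and t: "\<forall>i. t \<le> squash (l i)" and s: "\<forall>i. squash (u i) \<le> s"
  shows "t \<le> s"
proof -
  have "t \<le> 1" "-1 \<le> s"
    using order_trans[OF t[rule_format] squash_bounds(2)]
      order_trans[OF squash_bounds(1) s[rule_format]] by blast+
  have "unsquash t \<le> (INF i. l i)"
    using t unsquash_le_iff[OF \<open>t \<le> 1\<close>] by (blast intro: INF_greatest)
  also have "\<dots> \<le> (SUP i. u i)"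
    by fact
  also have "\<dots> \<le> unsquash s"
    using s le_unsquash_iff[OF \<open>-1 \<le> s\<close>] by (blast intro: SUP_least)
  finally have "t \<le> squash (unsquash s)"
    using \<open>t \<le> 1\<close> unsquash_le_iff by blast
  also have "\<dots> \<le> s"
    using le_unsquash_iff[OF \<open>-1 \<le> s\<close>, of "unsquash s"] by simp
  finally show "t \<le> s" .
qed

lemma INF_le_unsquash:
  fixes l :: "'i \<Rightarrow> ereal"
  assumes lower: "\<And>t. \<forall>i. t \<le> squash (l i) \<Longrightarrow> t \<le> y"
  shows "(INF i. l i) \<le> unsquash y"
proof -
  have "squash (INF i. l i) \<le> y"
    by (intro lower allI squash_le_iff[THEN iffD2] INF_lower UNIV_I)
  moreover have "-1 \<le> y"
    using squash_bounds(1) by (intro lower allI)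
  ultimately show ?thesis
    using le_unsquash_iff by blast
qed

lemma unsquash_le_SUP:
  fixes u :: "'i \<Rightarrow> ereal"
  assumes upper: "\<And>s. \<forall>i. squash (u i) \<le> s \<Longrightarrow> y \<le> s"
  shows "unsquash y \<le> (SUP i. u i)"
proof -
  have "y \<le> squash (SUP i. u i)"
    by (intro upper allI squash_le_iff[THEN iffD2] SUP_upper UNIV_I)
  moreover have "y \<le> 1"
    using squash_bounds(2) by (intro upper allI)
  ultimately show ?thesis
    using unsquash_le_iff by blast
qed

lemma countable_Hahn_insertion:
  fixes l u :: "'i::countable \<Rightarrow> 'a \<Rightarrow> ereal"
  assumes cont_l: "\<And>i. continuous_map X euclidean (l i)"
    and cont_u: "\<And>i. continuous_map X euclidean (u i)"
    and INF_le_SUP: "\<And>x. x \<in> topspace X \<Longrightarrow> (INF i. l i x) \<le> (SUP i. u i x)"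
  shows "\<exists>f. continuous_map X euclidean f \<and>
           (\<forall>x \<in> topspace X. (INF i. l i x) \<le> f x \<and> f x \<le> (SUP i. u i x))"
proof -
  have "\<exists>\<phi>. continuous_map X euclideanreal \<phi> \<and>
       (\<forall>x \<in> topspace X. (\<forall>t. (\<forall>i. t \<le> squash (l i x)) \<longrightarrow> t \<le> \<phi> x) \<and>
                          (\<forall>s. (\<forall>i. squash (u i x) \<le> s) \<longrightarrow> \<phi> x \<le> s))"
  proof (rule countable_Hahn_insertion_real[where c = 1])
    show "continuous_map X euclideanreal (\<lambda>x. squash (l i x))"
      "continuous_map X euclideanreal (\<lambda>x. squash (u i x))" for i
      using continuous_map_compose[OF cont_l continuous_map_squash]
        continuous_map_compose[OF cont_u continuous_map_squash] by (simp_all add: o_def)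
    show "\<bar>squash (l i x)\<bar> \<le> 1 \<and> \<bar>squash (u i x)\<bar> \<le> 1" for i x
      using squash_bounds by (simp add: abs_le_iff)
    show "t \<le> s" if "x \<in> topspace X" "\<forall>i. t \<le> squash (l i x)" "\<forall>i. squash (u i x) \<le> s" for x s t
      using INF_le_SUP[OF that(1)] that(2,3) by (rule squash_lower_bound_le_upper_bound)
  qed
  then obtain \<phi> where cont_\<phi>: "continuous_map X euclideanreal \<phi>"
    and \<phi>: "\<And>x. x \<in> topspace X \<Longrightarrow>
       (\<forall>t. (\<forall>i. t \<le> squash (l i x)) \<longrightarrow> t \<le> \<phi> x) \<and> (\<forall>s. (\<forall>i. squash (u i x) \<le> s) \<longrightarrow> \<phi> x \<le> s)"
    by blast
  show ?thesis
  proof (intro exI conjI ballI)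
    show "continuous_map X euclidean (\<lambda>x. unsquash (\<phi> x))"
      using continuous_map_compose[OF cont_\<phi> continuous_map_unsquash] by (simp add: o_def)
    fix x
    assume "x \<in> topspace X"
    then show "(INF i. l i x) \<le> unsquash (\<phi> x)" "unsquash (\<phi> x) \<le> (SUP i. u i x)"
      using \<phi> by (intro INF_le_unsquash unsquash_le_SUP; blast)+
  qed
qed

lemma INF_unsquash_minus_multiple:
  assumes "0 \<le> t"
  shows "(INF m::nat. unsquash (squash e - real m * t)) = (if t = 0 then e else -\<infinity>)"
proof (cases "t = 0")
  case False
  then obtain m where "2 < real m * t"
    using ex_less_of_nat_mult[of t 2] assms by auto
  then have "unsquash (squash e - real m * t) = -\<infinity>"
    using squash_bounds[of e] by (intro unsquash_eq_minus_infinity) linarith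
  then have "(INF m::nat. unsquash (squash e - real m * t)) \<le> -\<infinity>"
    by (metis INF_lower UNIV_I)
  with False show ?thesis
    by simp
qed simp

lemma SUP_unsquash_plus_multiple:
  assumes "0 \<le> t"
  shows "(SUP m::nat. unsquash (squash e + real m * t)) = (if t = 0 then e else \<infinity>)"
proof (cases "t = 0")
  case False
  then obtain m where "2 < real m * t"
    using ex_less_of_nat_mult[of t 2] assms by auto
  then have "unsquash (squash e + real m * t) = \<infinity>"
    using squash_bounds[of e] by (intro unsquash_eq_infinity) linarith
  then have "\<infinity> \<le> (SUP m::nat. unsquash (squash e + real m * t))"
    by (metis SUP_upper UNIV_I)
  with False show ?thesis
    by simp
qed simp

lemma INF_max_distrib:
  fixes f g :: "_ \<Rightarrow> 'a::complete_linorder"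
  shows "(INF p. max (f (fst p)) (g (snd p))) = max (INF i. f i) (INF j. g j)"
  by (simp add: INF_sup_distrib2 INF_pair flip: sup_max)

lemma SUP_min_distrib:
  fixes f g :: "_ \<Rightarrow> 'a::complete_linorder"
  shows "(SUP p. min (f (fst p)) (g (snd p))) = min (SUP i. f i) (SUP j. g j)"
  by (simp add: SUP_inf_distrib2 SUP_pair flip: inf_min)

lemma INF_max_unsquash_penalty:
  fixes a :: "'i \<Rightarrow> ereal"
  assumes "0 \<le> t"
  shows "(INF p. max (a (fst p)) (unsquash (squash e - real (snd p) * t))) =
           (if t = 0 then max (INF i. a i) e else (INF i. a i))"
  using INF_max_distrib[of a "\<lambda>m. unsquash (squash e - real m * t)"]
    INF_unsquash_minus_multiple[OF assms] by simp

lemma SUP_min_unsquash_penalty: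
  fixes a :: "'i \<Rightarrow> ereal"
  assumes "0 \<le> t"
  shows "(SUP p. min (a (fst p)) (unsquash (squash e + real (snd p) * t))) =
           (if t = 0 then min (SUP i. a i) e else (SUP i. a i))"
  using SUP_min_distrib[of a "\<lambda>m. unsquash (squash e + real m * t)"]
    SUP_unsquash_plus_multiple[OF assms] by simp

lemma countable_Hahn_insertion_extension:
  fixes gn hn :: "'i::countable \<Rightarrow> 'a \<Rightarrow> ereal" and f0 :: "'a \<Rightarrow> ereal" and \<alpha> :: "'a \<Rightarrow> real"
  assumes cont_gn: "\<And>i. continuous_map X euclidean (gn i)"
    and cont_hn: "\<And>i. continuous_map X euclidean (hn i)"
    and cont_f0: "continuous_map X euclidean f0"
    and cont_\<alpha>: "continuous_map X euclideanreal \<alpha>"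
    and \<alpha>_nonneg: "\<And>x. x \<in> topspace X \<Longrightarrow> 0 \<le> \<alpha> x"
    and INF_le_SUP: "\<And>x. x \<in> topspace X \<Longrightarrow> (INF i. gn i x) \<le> (SUP i. hn i x)"
    and f0_between: "\<And>x. \<lbrakk>x \<in> topspace X; \<alpha> x = 0\<rbrakk> \<Longrightarrow>
                        (INF i. gn i x) \<le> f0 x \<and> f0 x \<le> (SUP i. hn i x)"
  shows "\<exists>f. continuous_map X euclidean f \<and>
           (\<forall>x \<in> topspace X. (\<alpha> x = 0 \<longrightarrow> f x = f0 x) \<and>
                              (INF i. gn i x) \<le> f x \<and> f x \<le> (SUP i. hn i x))"
proof -
  define l where "l p x = max (gn (fst p) x) (unsquash (squash (f0 x) - real (snd p) * \<alpha> x))"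
    for p :: "'i \<times> nat" and x
  define u where "u p x = min (hn (fst p) x) (unsquash (squash (f0 x) + real (snd p) * \<alpha> x))"
    for p :: "'i \<times> nat" and x
  have INF_l: "(INF p. l p x) = (if \<alpha> x = 0 then max (INF i. gn i x) (f0 x) else (INF i. gn i x))"
    if "x \<in> topspace X" for x
    unfolding l_def by (rule INF_max_unsquash_penalty[OF \<alpha>_nonneg[OF that]])
  have SUP_u: "(SUP p. u p x) = (if \<alpha> x = 0 then min (SUP i. hn i x) (f0 x) else (SUP i. hn i x))"
    if "x \<in> topspace X" for x
    unfolding u_def by (rule SUP_min_unsquash_penalty[OF \<alpha>_nonneg[OF that]])
  have "continuous_map X euclidean (l p)" "continuous_map X euclidean (u p)" for p
    unfolding l_def u_def
    by (intro continuous_map_max continuous_map_min cont_gn cont_hn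
        continuous_map_compose[OF _ continuous_map_unsquash, unfolded o_def]
        continuous_intros continuous_map_compose[OF cont_f0 continuous_map_squash, unfolded o_def]
        cont_\<alpha>)+
  moreover have "(INF p. l p x) \<le> (SUP p. u p x)" if "x \<in> topspace X" for x
    using INF_le_SUP[OF that] f0_between[OF that] by (simp add: INF_l SUP_u that)
  ultimately obtain f where f: "continuous_map X euclidean f"
    and between: "\<And>x. x \<in> topspace X \<Longrightarrow> (INF p. l p x) \<le> f x \<and> f x \<le> (SUP p. u p x)"
    using countable_Hahn_insertion by metis
  have "(\<alpha> x = 0 \<longrightarrow> f x = f0 x) \<and> (INF i. gn i x) \<le> f x \<and> f x \<le> (SUP i. hn i x)"
    if "x \<in> topspace X" for x
    using between[OF that] by (cases "\<alpha> x = 0") (auto simp: INF_l[OF that] SUP_u[OF that])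
  with f show ?thesis
    by blast
qed

theorem proposition2p2:
  fixes X :: "'a topology" and Y :: "'a set"
    and g h f0 :: "'a \<Rightarrow> ereal"
  assumes "functionally_closed X Y"
    and "countable_Hahn_pair X g h"
    and "continuous_map X euclidean f0"
    and "\<forall>y \<in> Y. g y \<le> f0 y \<and> f0 y \<le> h y"
  shows "\<exists>f. continuous_map X euclidean f \<and> (\<forall>y \<in> Y. f y = f0 y) \<and>
             (\<forall>x \<in> topspace X. g x \<le> f x \<and> f x \<le> h x)"
proof -
  obtain \<alpha> where \<alpha>: "continuous_map X (top_of_set {0..1::real}) \<alpha>"
    and Y: "Y = {x \<in> topspace X. \<alpha> x = 0}"
    using assms(1) unfolding functionally_closed_def by blast
  then have cont_\<alpha>: "continuous_map X euclideanreal \<alpha>" "\<And>x. x \<in> topspace X \<Longrightarrow> 0 \<le> \<alpha> x"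
    by (auto simp: continuous_map_in_subtopology)
  obtain gn hn :: "nat \<Rightarrow> 'a \<Rightarrow> ereal"
    where cont: "\<And>n. continuous_map X euclidean (gn n)" "\<And>n. continuous_map X euclidean (hn n)"
      and gh: "\<And>x. x \<in> topspace X \<Longrightarrow> g x = (INF n. gn n x) \<and> h x = (SUP n. hn n x) \<and> g x \<le> h x"
    using assms(2) unfolding countable_Hahn_pair_def by blast
  have "\<exists>f. continuous_map X euclidean f \<and>
          (\<forall>x \<in> topspace X. (\<alpha> x = 0 \<longrightarrow> f x = f0 x) \<and> (INF n. gn n x) \<le> f x \<and> f x \<le> (SUP n. hn n x))"
  proof (rule countable_Hahn_insertion_extension)
    show "(INF n. gn n x) \<le> (SUP n. hn n x)" if "x \<in> topspace X" for x
      using gh[OF that] by metis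
    show "(INF n. gn n x) \<le> f0 x \<and> f0 x \<le> (SUP n. hn n x)" if "x \<in> topspace X" "\<alpha> x = 0" for x
      using gh[OF that(1)] assms(4) that unfolding Y by (metis (mono_tags, lifting) mem_Collect_eq)
  qed (use cont cont_\<alpha> assms(3) in auto)
  with gh show ?thesis
    by (auto simp: Y)
qed

end
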